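(* Let $X$ be a real Banach space whose norm is Fréchet differentiable. Then an element $x\in\ell^1(X)$ is a right symmetric point of $\ell^1(X)$ if and only if there is an index $n$ such that $x_k=0$ for all $k\neq n$ and $x_n$ is a right symmetric point of $X$, i.e. $x=(0,\dots,0,x_n,0,\dots)$ with $x_n$ right symmetric in $X$.
   Context: $\ell^1(X)$ is the space of sequences $(x_n)_{n\in\mathbb{N}}$ in $X$ with $\|(x_n)\|=\sum_n\|x_n\|<\infty$. In a real normed space $Y$, $x\perp_{BJ}y$ means $\|x+\lambda y\|\ge\|x\|$ for all $\lambda\in\mathbb{R}$; $x$ is a right symmetric point if $y\perp_{BJ}x$ implies $x\perp_{BJ}y$ for all $y\in Y$. The norm of $X$ is Fréchet differentiable if for every non-zero $x$ there is $\varphi\in X^*$ with $\lim_{h\to0}\big|\|x+h\|-\|x\|-\varphi(h)\big|/\|h\|=0$. *)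

theory Defs
  imports "HOL-Analysis.Analysis"
begin

definition bj_orth :: "'a::real_normed_vector \<Rightarrow> 'a \<Rightarrow> bool" where
  "bj_orth x y \<longleftrightarrow> (\<forall>t::real. norm (x + t *\<^sub>R y) \<ge> norm x)"

definition right_symmetric :: "'a::real_normed_vector \<Rightarrow> bool" where
  "right_symmetric x \<longleftrightarrow> (\<forall>y. bj_orth y x \<longrightarrow> bj_orth x y)"

definition frechet_smooth_norm :: "'a::real_normed_vector itself \<Rightarrow> bool" where
  "frechet_smooth_norm _ \<longleftrightarrow>
     (\<forall>x::'a. x \<noteq> 0 \<longrightarrow> (\<exists>\<phi>. (norm has_derivative \<phi>) (at x)))"

definition l1 :: "(nat \<Rightarrow> 'a::real_normed_vector) set" where
  "l1 = {f. summable (\<lambda>n. norm (f n))}"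

definition l1_norm :: "(nat \<Rightarrow> 'a::real_normed_vector) \<Rightarrow> real" where
  "l1_norm f = (\<Sum>n. norm (f n))"

definition l1_bj_orth :: "(nat \<Rightarrow> 'a::real_normed_vector) \<Rightarrow> (nat \<Rightarrow> 'a) \<Rightarrow> bool" where
  "l1_bj_orth f g \<longleftrightarrow> (\<forall>t::real. l1_norm (\<lambda>n. f n + t *\<^sub>R g n) \<ge> l1_norm f)"

definition l1_right_symmetric :: "(nat \<Rightarrow> 'a::real_normed_vector) \<Rightarrow> bool" where
  "l1_right_symmetric f \<longleftrightarrow> (\<forall>g\<in>l1. l1_bj_orth g f \<longrightarrow> l1_bj_orth f g)"

end

theory Submission
  imports Defs
begin

text \<open>The norm of \<open>\<ell>\<^sup>1(X)\<close> is a sum of coordinate norms, so changing one coordinate changes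
  it by the difference of the two coordinate norms. For \<open>x\<close> supported at a single index \<open>n\<close>
  this reduces orthogonality to the \<open>n\<close>-th coordinate: \<open>g \<perp> x\<close> iff \<open>g\<^sub>n \<perp> x\<^sub>n\<close>, and
  \<open>x\<^sub>n \<perp> g\<^sub>n\<close> already forces \<open>x \<perp> g\<close>, which yields the equivalence for such \<open>x\<close>.
  If \<open>x\<close> has two non-zero coordinates \<open>m \<noteq> n\<close> with \<open>\<parallel>x\<^sub>m\<parallel> \<le> \<parallel>x\<^sub>n\<parallel>\<close>, then \<open>g = x\<^sub>m e\<^sub>m\<close>
  satisfies \<open>g \<perp> x\<close>, because the mass of \<open>x\<close> off \<open>m\<close> is at least \<open>\<parallel>x\<^sub>m\<parallel>\<close>, whereas
  \<open>x \<perp> g\<close> would make \<open>x\<^sub>m\<close> orthogonal to itself.\<close>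

lemma sums_modify_at:
  fixes f h :: "nat \<Rightarrow> real"
  assumes "summable f" and "\<And>k. k \<noteq> m \<Longrightarrow> h k = f k"
  shows "h sums (suminf f - f m + h m)"
proof -
  have "(\<lambda>k. f k + (if k = m then h m - f m else 0)) = h"
    using assms(2) by (auto simp: fun_eq_iff)
  moreover have "(\<lambda>k. f k + (if k = m then h m - f m else 0)) sums (suminf f + (h m - f m))"
    using sums_add[OF summable_sums[OF assms(1)] sums_single[of m "\<lambda>_. h m - f m"]] by simp
  ultimately show ?thesis
    by (simp add: algebra_simps)
qed

lemma l1_norm_modify_at:
  fixes f h :: "nat \<Rightarrow> 'a::real_normed_vector"
  assumes "f \<in> l1" and "\<And>k. k \<noteq> m \<Longrightarrow> h k = f k"
  shows "h \<in> l1" and "l1_norm h = l1_norm f - norm (f m) + norm (h m)"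
proof -
  have "(\<lambda>k. norm (h k)) sums (l1_norm f - norm (f m) + norm (h m))"
    using sums_modify_at[of "\<lambda>k. norm (f k)" m "\<lambda>k. norm (h k)"] assms unfolding l1_def l1_norm_def by simp
  then show "h \<in> l1" and "l1_norm h = l1_norm f - norm (f m) + norm (h m)"
    by (auto simp: l1_def l1_norm_def sums_iff)
qed

lemma l1_zero: "(\<lambda>_. 0) \<in> l1" and l1_norm_zero: "l1_norm (\<lambda>_. 0) = 0"
  by (simp_all add: l1_def l1_norm_def)

lemma l1_scaleR: "f \<in> l1 \<Longrightarrow> (\<lambda>k. c *\<^sub>R f k) \<in> l1"
  and l1_norm_scaleR: "f \<in> l1 \<Longrightarrow> l1_norm (\<lambda>k. c *\<^sub>R f k) = \<bar>c\<bar> * l1_norm f"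
  by (simp_all add: l1_def l1_norm_def summable_mult suminf_mult)

lemma
  fixes f :: "nat \<Rightarrow> 'a::real_normed_vector"
  assumes "\<And>k. k \<noteq> n \<Longrightarrow> f k = 0"
  shows l1_concentrated: "f \<in> l1"
    and l1_norm_concentrated: "l1_norm f = norm (f n)"
  using l1_norm_modify_at[OF l1_zero, of n f] assms by (simp_all add: l1_norm_zero)

lemma norm_add_norm_le_l1_norm:
  fixes f :: "nat \<Rightarrow> 'a::real_normed_vector"
  assumes "f \<in> l1" and "m \<noteq> n"
  shows "norm (f m) + norm (f n) \<le> l1_norm f"
  using sum_le_suminf[of "\<lambda>k. norm (f k)" "{m, n}"] assms
  by (simp add: l1_def l1_norm_def)

lemma norm_le_l1_norm:
  fixes f :: "nat \<Rightarrow> 'a::real_normed_vector"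
  assumes "f \<in> l1"
  shows "norm (f n) \<le> l1_norm f"
  using sum_le_suminf[of "\<lambda>k. norm (f k)" "{n}"] assms
  by (simp add: l1_def l1_norm_def)

lemma bj_orth_self_iff: "bj_orth x x \<longleftrightarrow> x = 0"
proof
  assume "bj_orth x x"
  then have "norm x \<le> norm (x + (-1) *\<^sub>R x)"
    unfolding bj_orth_def by blast
  then show "x = 0" by simp
qed (simp add: bj_orth_def)

lemma l1_bj_orth_concentrated_iff:
  fixes g x :: "nat \<Rightarrow> 'a::real_normed_vector"
  assumes "g \<in> l1" and x: "\<And>k. k \<noteq> n \<Longrightarrow> x k = 0"
  shows "l1_bj_orth g x \<longleftrightarrow> bj_orth (g n) (x n)"
proof -
  have "l1_norm (\<lambda>k. g k + t *\<^sub>R x k) = l1_norm g - norm (g n) + norm (g n + t *\<^sub>R x n)"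
    for t :: real
    using l1_norm_modify_at(2)[OF assms(1), of n "\<lambda>k. g k + t *\<^sub>R x k"] x by simp
  then show ?thesis
    unfolding l1_bj_orth_def bj_orth_def by auto
qed

lemma l1_bj_orth_concentrated:
  fixes g x :: "nat \<Rightarrow> 'a::real_normed_vector"
  assumes "g \<in> l1" and x: "\<And>k. k \<noteq> n \<Longrightarrow> x k = 0"
    and "bj_orth (x n) (g n)"
  shows "l1_bj_orth x g"
  unfolding l1_bj_orth_def
proof
  fix t :: real
  have "l1_norm (\<lambda>k. x k + t *\<^sub>R g k)
      = \<bar>t\<bar> * l1_norm g - norm (t *\<^sub>R g n) + norm (x n + t *\<^sub>R g n)"
    using l1_norm_modify_at(2)[OF l1_scaleR[OF assms(1), where c = t], of n "\<lambda>k. x k + t *\<^sub>R g k"] x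
    by (simp add: l1_norm_scaleR[OF assms(1)])
  also have "\<dots> \<ge> norm (x n + t *\<^sub>R g n)"
    using mult_left_mono[OF norm_le_l1_norm[OF assms(1), of n], of "\<bar>t\<bar>"] by simp
  moreover have "norm (x n + t *\<^sub>R g n) \<ge> l1_norm x"
    using assms(3) l1_norm_concentrated[OF x] by (simp add: bj_orth_def)
  ultimately show "l1_norm x \<le> l1_norm (\<lambda>k. x k + t *\<^sub>R g k)" by linarith
qed

lemma l1_right_symmetric_concentrated_iff:
  fixes x :: "nat \<Rightarrow> 'a::real_normed_vector"
  assumes x: "\<And>k. k \<noteq> n \<Longrightarrow> x k = 0"
  shows "l1_right_symmetric x \<longleftrightarrow> right_symmetric (x n)"
proof
  assume rs: "l1_right_symmetric x"
  show "right_symmetric (x n)"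
    unfolding right_symmetric_def
  proof (intro allI impI)
    fix y
    assume "bj_orth y (x n)"
    define g where "g = (\<lambda>k. if k = n then y else 0)"
    have g: "\<And>k. k \<noteq> n \<Longrightarrow> g k = 0" by (simp add: g_def)
    have "l1_bj_orth g x"
      using \<open>bj_orth y (x n)\<close> l1_bj_orth_concentrated_iff[OF l1_concentrated[OF g] x]
      by (simp add: g_def)
    then have "l1_bj_orth x g"
      using rs l1_concentrated[OF g] by (simp add: l1_right_symmetric_def)
    then show "bj_orth (x n) y"
      using l1_bj_orth_concentrated_iff[OF l1_concentrated[OF x] g] by (simp add: g_def)
  qed
next
  assume "right_symmetric (x n)"
  then show "l1_right_symmetric x"
    unfolding l1_right_symmetric_def
    using l1_bj_orth_concentrated_iff[OF _ x] l1_bj_orth_concentrated[OF _ x]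
    by (auto simp: right_symmetric_def)
qed

lemma not_l1_right_symmetric_two_coordinates:
  fixes x :: "nat \<Rightarrow> 'a::real_normed_vector"
  assumes "x \<in> l1" and "m \<noteq> n" and "x m \<noteq> 0" and "norm (x m) \<le> norm (x n)"
  shows "\<not> l1_right_symmetric x"
proof
  assume rs: "l1_right_symmetric x"
  define g where "g = (\<lambda>k. if k = m then x m else 0)"
  have g: "\<And>k. k \<noteq> m \<Longrightarrow> g k = 0" by (simp add: g_def)
  have "l1_bj_orth g x"
    unfolding l1_bj_orth_def
  proof
    fix t :: real
    have "x m + t *\<^sub>R x m = (1 + t) *\<^sub>R x m"
      by (simp add: scaleR_add_left)
    then have "norm (x m + t *\<^sub>R x m) = \<bar>1 + t\<bar> * norm (x m)"
      by simp
    then have "l1_norm (\<lambda>k. g k + t *\<^sub>R x k)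
        = \<bar>t\<bar> * (l1_norm x - norm (x m)) + \<bar>1 + t\<bar> * norm (x m)"
      using l1_norm_modify_at(2)[OF l1_scaleR[OF assms(1), where c = t], of m "\<lambda>k. g k + t *\<^sub>R x k"]
      by (simp add: g_def l1_norm_scaleR[OF assms(1)] algebra_simps)
    moreover have "\<bar>t\<bar> * norm (x m) \<le> \<bar>t\<bar> * (l1_norm x - norm (x m))"
      using norm_add_norm_le_l1_norm[OF assms(1,2)] assms(4) by (intro mult_left_mono) auto
    moreover have "norm (x m) \<le> (\<bar>t\<bar> + \<bar>1 + t\<bar>) * norm (x m)"
      using mult_right_mono[of 1 "\<bar>t\<bar> + \<bar>1 + t\<bar>" "norm (x m)"] by simp
    ultimately show "l1_norm g \<le> l1_norm (\<lambda>k. g k + t *\<^sub>R x k)"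
      using l1_norm_concentrated[OF g] by (simp add: g_def algebra_simps)
  qed
  then have "l1_bj_orth x g"
    using rs l1_concentrated[OF g] by (simp add: l1_right_symmetric_def)
  then have "bj_orth (x m) (x m)"
    using l1_bj_orth_concentrated_iff[OF assms(1) g] by (simp add: g_def)
  with \<open>x m \<noteq> 0\<close> show False by (simp add: bj_orth_self_iff)
qed

lemma l1_right_symmetric_imp_concentrated:
  fixes x :: "nat \<Rightarrow> 'a::real_normed_vector"
  assumes "x \<in> l1" and "l1_right_symmetric x"
  shows "\<exists>n. \<forall>k. k \<noteq> n \<longrightarrow> x k = 0"
proof (rule ccontr)
  assume "\<nexists>n. \<forall>k. k \<noteq> n \<longrightarrow> x k = 0"
  then obtain m n where "m \<noteq> n" "x m \<noteq> 0" "x n \<noteq> 0"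
    by metis
  then show False
    using not_l1_right_symmetric_two_coordinates[OF assms(1), of m n]
      not_l1_right_symmetric_two_coordinates[OF assms(1), of n m] assms(2)
    by (cases "norm (x m) \<le> norm (x n)") auto
qed

theorem corollary3p12:
  fixes x :: "nat \<Rightarrow> 'a::banach"
  assumes "frechet_smooth_norm TYPE('a)"
    and "x \<in> l1"
  shows "l1_right_symmetric x \<longleftrightarrow>
           (\<exists>n. (\<forall>k. k \<noteq> n \<longrightarrow> x k = 0) \<and> right_symmetric (x n))"
  using l1_right_symmetric_imp_concentrated[OF assms(2)] l1_right_symmetric_concentrated_iff
  by metis

end
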